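(* For every integer $d>2$, $\gamma_{gr}^{L,d-1}(Q_d)=2^d-1$ and $\gamma_{gr}^{L,d-2}(Q_d)=2^d-2$.
   Context: $Q_d$ is the $d$-dimensional hypercube: vertices are the $0$-$1$ strings of length $d$, adjacent iff they differ in exactly one position. For a vertex $v$, $N(v)$ is its open neighborhood and $N[v]=N(v)\cup\{v\}$. A sequence $S=(v_1,\ldots,v_m)$ of distinct vertices is a $k$-$L$-sequence if for each $i$ there is $u_i\in N[v_i]$ such that the number of indices $j<i$ with $u_i\in N(v_j)$ is less than $k$. $\gamma_{gr}^{L,k}(G)$ is the maximum length of a $k$-$L$-sequence of $G$. *)

theory Defs
  imports Main
begin

definition open_nbhd :: "'a set \<Rightarrow> ('a \<Rightarrow> 'a \<Rightarrow> bool) \<Rightarrow> 'a \<Rightarrow> 'a set" where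
  "open_nbhd V adj v = {u \<in> V. adj v u}"

definition closed_nbhd :: "'a set \<Rightarrow> ('a \<Rightarrow> 'a \<Rightarrow> bool) \<Rightarrow> 'a \<Rightarrow> 'a set" where
  "closed_nbhd V adj v = insert v (open_nbhd V adj v)"

definition is_kL_sequence :: "'a set \<Rightarrow> ('a \<Rightarrow> 'a \<Rightarrow> bool) \<Rightarrow> nat \<Rightarrow> 'a list \<Rightarrow> bool" where
  "is_kL_sequence V adj k S \<longleftrightarrow>
     distinct S \<and> set S \<subseteq> V \<and>
     (\<forall>i < length S. \<exists>u \<in> closed_nbhd V adj (S ! i).
        card {j. j < i \<and> u \<in> open_nbhd V adj (S ! j)} < k)"

definition grundy_L_k :: "'a set \<Rightarrow> ('a \<Rightarrow> 'a \<Rightarrow> bool) \<Rightarrow> nat \<Rightarrow> nat" where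
  "grundy_L_k V adj k = Max {length S | S. is_kL_sequence V adj k S}"

definition hypercube_vertices :: "nat \<Rightarrow> bool list set" where
  "hypercube_vertices d = {xs. length xs = d}"

definition hypercube_adj :: "bool list \<Rightarrow> bool list \<Rightarrow> bool" where
  "hypercube_adj xs ys \<longleftrightarrow> length xs = length ys \<and>
     card {i. i < length xs \<and> xs ! i \<noteq> ys ! i} = 1"

end

(* Upper bound: let u witness the last vertex v_m of a k-L-sequence. Fewer than k of the d
   neighbours of u occur among v_1, ..., v_(m-1), so at least d - k + 1 of them lie outside
   this prefix, whence m - 1 <= 2^d - (d - k + 1).

   Lower bound: list the vertices other than 0 (for k = d - 2 also other than 110...0) in
   increasing order of a potential that puts all odd-weight vertices first and the even-weight
   ones by decreasing weight. An odd-weight vertex is its own witness u, since all its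
   neighbours come later. An even-weight vertex v uses u = v - {i}: its neighbours v and
   v - {i, j} for j in v - {i} do not precede v, which gives the d - k + 1 = 2 neighbours
   needed. For k = d - 2 a weight-2 vertex {a, b} needs a third one, found at u = {a}: its
   neighbours 0 and 110...0 are not listed, and its neighbour {0, a} is placed after all
   other weight-2 vertices. *)

theory Submission
  imports Defs
begin

lemma grundy_L_k_eqI:
  assumes "\<And>S. is_kL_sequence V adj k S \<Longrightarrow> length S \<le> m"
    and "is_kL_sequence V adj k S" and "length S = m"
  shows "grundy_L_k V adj k = m"
  unfolding grundy_L_k_def
proof (rule Max_eqI)
  show "finite {length S |S. is_kL_sequence V adj k S}"
    by (rule finite_subset[of _ "{..m}"]) (auto dest: assms(1))
qed (use assms in auto)

lemma card_open_nbhd_inter_prefix_le: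
  assumes sym: "\<And>x y. adj x y \<Longrightarrow> adj y x" and "u \<in> V"
  shows "card (open_nbhd V adj u \<inter> set (take i S))
    \<le> card {j. j < i \<and> u \<in> open_nbhd V adj (S ! j)}"
proof -
  let ?J = "{j. j < i \<and> u \<in> open_nbhd V adj (S ! j)}"
  have "open_nbhd V adj u \<inter> set (take i S) \<subseteq> (\<lambda>j. S ! j) ` ?J"
  proof
    fix y assume "y \<in> open_nbhd V adj u \<inter> set (take i S)"
    then obtain j where "j < i" "j < length S" "y = S ! j" "adj u y"
      by (auto simp: open_nbhd_def in_set_conv_nth)
    then show "y \<in> (\<lambda>j. S ! j) ` ?J"
      using \<open>u \<in> V\<close> sym by (auto simp: open_nbhd_def)
  qed
  then have "card (open_nbhd V adj u \<inter> set (take i S)) \<le> card ((\<lambda>j. S ! j) ` ?J)"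
    by (intro card_mono) auto
  also have "\<dots> \<le> card ?J"
    by (intro card_image_le) auto
  finally show ?thesis .
qed

lemma is_kL_sequence_length_le:
  assumes "finite V" and sym: "\<And>x y. adj x y \<Longrightarrow> adj y x"
    and deg: "\<And>v. v \<in> V \<Longrightarrow> \<delta> \<le> card (open_nbhd V adj v)"
    and seq: "is_kL_sequence V adj k S"
  shows "length S \<le> card V + k - \<delta>"
proof (cases "S = []")
  case False
  define i where "i = length S - 1"
  have i: "i < length S" using False by (simp add: i_def)
  have "distinct S" and "set S \<subseteq> V" using seq by (auto simp: is_kL_sequence_def)
  obtain u where u: "u \<in> closed_nbhd V adj (S ! i)"
    and few: "card {j. j < i \<and> u \<in> open_nbhd V adj (S ! j)} < k"
    using seq i by (auto simp: is_kL_sequence_def)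
  have "u \<in> V" using u i \<open>set S \<subseteq> V\<close> by (auto simp: closed_nbhd_def open_nbhd_def)
  define N where "N = open_nbhd V adj u"
  define Pre where "Pre = set (take i S)"
  have "finite N" using \<open>finite V\<close> by (simp add: N_def open_nbhd_def)
  have card_Pre: "card Pre = i"
    using \<open>distinct S\<close> i by (simp add: Pre_def distinct_card)
  have "Pre \<subseteq> V" using \<open>set S \<subseteq> V\<close> set_take_subset by (fastforce simp: Pre_def)
  have "card (N \<inter> Pre) \<le> card {j. j < i \<and> u \<in> open_nbhd V adj (S ! j)}"
    unfolding N_def Pre_def using sym \<open>u \<in> V\<close> by (rule card_open_nbhd_inter_prefix_le)
  then have "card (N \<inter> Pre) < k" using few by linarith
  moreover have "card (N - Pre) \<le> card V - i"
  proof -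
    have "card (N - Pre) \<le> card (V - Pre)"
      using \<open>finite V\<close> by (intro card_mono) (auto simp: N_def open_nbhd_def)
    also have "\<dots> = card V - i"
      using \<open>Pre \<subseteq> V\<close> \<open>finite V\<close> card_Pre by (simp add: card_Diff_subset finite_subset)
    finally show ?thesis .
  qed
  moreover have "card N = card (N \<inter> Pre) + card (N - Pre)"
    using \<open>finite N\<close> by (metis card_Int_Diff)
  moreover have "\<delta> \<le> card N" using deg[OF \<open>u \<in> V\<close>] by (simp add: N_def)
  moreover have "i \<le> card V"
    using card_mono[OF \<open>finite V\<close> \<open>Pre \<subseteq> V\<close>] card_Pre by simp
  ultimately show ?thesis by (simp add: i_def)
qed simp

text \<open>Ties count as possibly preceding: sorting by \<open>f\<close> leaves their relative order arbitrary.\<close>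

definition may_precede :: "'a set \<Rightarrow> ('a \<Rightarrow> nat) \<Rightarrow> 'a \<Rightarrow> 'a \<Rightarrow> bool" where
  "may_precede X f y v \<longleftrightarrow> y \<in> X \<and> y \<noteq> v \<and> f y \<le> f v"

lemma ex_kL_sequence_sorted_by:
  assumes "finite X" and "X \<subseteq> V"
    and wit: "\<And>v. v \<in> X \<Longrightarrow>
      \<exists>u \<in> closed_nbhd V adj v. card {y. adj y u \<and> may_precede X f y v} < k"
  shows "\<exists>S. is_kL_sequence V adj k S \<and> length S = card X"
proof -
  obtain xs where "set xs = X" "distinct xs"
    using finite_distinct_list[OF \<open>finite X\<close>] by blast
  define S where "S = sort_key f xs"
  have "distinct S" "set S = X" "sorted (map f S)"
    using \<open>set xs = X\<close> \<open>distinct xs\<close> by (simp_all add: S_def)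
  have "\<exists>u \<in> closed_nbhd V adj (S ! i). card {j. j < i \<and> u \<in> open_nbhd V adj (S ! j)} < k"
    if i: "i < length S" for i
  proof -
    obtain u where u: "u \<in> closed_nbhd V adj (S ! i)"
      and few: "card {y. adj y u \<and> may_precede X f y (S ! i)} < k"
      using wit[of "S ! i"] i \<open>set S = X\<close> by auto
    let ?J = "{j. j < i \<and> u \<in> open_nbhd V adj (S ! j)}"
    have "(\<lambda>j. S ! j) ` ?J \<subseteq> {y. adj y u \<and> may_precede X f y (S ! i)}"
    proof clarify
      fix j assume j: "j < i" "u \<in> open_nbhd V adj (S ! j)"
      have "S ! j \<noteq> S ! i" using j i \<open>distinct S\<close> by (simp add: nth_eq_iff_index_eq)
      moreover have "f (S ! j) \<le> f (S ! i)"
        using sorted_nth_mono[OF \<open>sorted (map f S)\<close>, of j i] j i by simp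
      ultimately show "adj (S ! j) u \<and> may_precede X f (S ! j) (S ! i)"
        using j i \<open>set S = X\<close> by (auto simp: may_precede_def open_nbhd_def)
    qed
    moreover have "finite {y. adj y u \<and> may_precede X f y (S ! i)}"
      using \<open>finite X\<close> by (rule rev_finite_subset) (auto simp: may_precede_def)
    moreover have "inj_on (\<lambda>j. S ! j) ?J"
      using inj_on_nth[OF \<open>distinct S\<close>, of ?J] i by auto
    ultimately have "card ?J \<le> card {y. adj y u \<and> may_precede X f y (S ! i)}"
      by (simp add: card_image[symmetric] card_mono)
    then have "card ?J < k" using few by linarith
    with u show ?thesis by blast
  qed
  then have "is_kL_sequence V adj k S"
    using \<open>distinct S\<close> \<open>set S = X\<close> \<open>X \<subseteq> V\<close> by (simp add: is_kL_sequence_def)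
  moreover have "length S = card X"
    using \<open>distinct S\<close> \<open>set S = X\<close> distinct_card by fastforce
  ultimately show ?thesis by blast
qed

lemma mem_hypercube_vertices: "x \<in> hypercube_vertices d \<longleftrightarrow> length x = d"
  by (simp add: hypercube_vertices_def)

definition flip :: "nat \<Rightarrow> bool list \<Rightarrow> bool list" where
  "flip p x = x[p := \<not> x ! p]"

lemma length_flip [simp]: "length (flip p x) = length x"
  by (simp add: flip_def)

lemma nth_flip: "i < length x \<Longrightarrow> flip p x ! i = (if i = p then \<not> x ! i else x ! i)"
  by (simp add: flip_def nth_list_update)

lemma flip_flip [simp]: "flip p (flip p x) = x"
  by (cases "p < length x") (simp_all add: flip_def list_update_beyond)

lemma inj_on_flip: "inj_on (\<lambda>p. flip p x) {..<length x}"
  by (rule inj_onI) (metis lessThan_iff nth_flip)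

lemma hypercube_adj_iff_flip: "hypercube_adj x y \<longleftrightarrow> (\<exists>p < length x. y = flip p x)"
proof
  assume adj: "hypercube_adj x y"
  then obtain p where D: "{i. i < length x \<and> x ! i \<noteq> y ! i} = {p}"
    by (auto simp: hypercube_adj_def card_Suc_eq)
  have "y = flip p x"
    using adj D by (intro nth_equalityI) (auto simp: hypercube_adj_def nth_flip set_eq_iff)
  with D show "\<exists>p < length x. y = flip p x" by blast
next
  assume "\<exists>p < length x. y = flip p x"
  then obtain p where "p < length x" "y = flip p x" by blast
  then have "{i. i < length x \<and> x ! i \<noteq> y ! i} = {p}" by (auto simp: nth_flip split: if_splits)
  then show "hypercube_adj x y" by (simp add: hypercube_adj_def \<open>y = flip p x\<close>)
qed

lemma hypercube_adj_sym: "hypercube_adj x y \<Longrightarrow> hypercube_adj y x"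
  by (metis flip_flip hypercube_adj_iff_flip length_flip)

lemma open_nbhd_hypercube:
  "length u = d \<Longrightarrow> open_nbhd (hypercube_vertices d) hypercube_adj u = (\<lambda>p. flip p u) ` {..<d}"
  by (auto simp: open_nbhd_def mem_hypercube_vertices hypercube_adj_iff_flip)

lemma card_open_nbhd_hypercube:
  "length u = d \<Longrightarrow> card (open_nbhd (hypercube_vertices d) hypercube_adj u) = d"
  using inj_on_flip[of u] by (simp add: open_nbhd_hypercube card_image)

lemma flip_in_closed_nbhd:
  "length v = d \<Longrightarrow> p < d \<Longrightarrow> flip p v \<in> closed_nbhd (hypercube_vertices d) hypercube_adj v"
  by (auto simp: closed_nbhd_def open_nbhd_hypercube)

lemma finite_hypercube_vertices: "finite (hypercube_vertices d)"
  using finite_lists_length_eq[of "UNIV :: bool set" d] by (simp add: hypercube_vertices_def)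

lemma card_hypercube_vertices: "card (hypercube_vertices d) = 2 ^ d"
  using card_lists_length_eq[of "UNIV :: bool set" d] by (simp add: hypercube_vertices_def)

lemma hypercube_kL_sequence_length_le:
  assumes "is_kL_sequence (hypercube_vertices d) hypercube_adj k S"
  shows "length S \<le> 2 ^ d + k - d"
proof -
  have "length S \<le> card (hypercube_vertices d) + k - d"
  proof (rule is_kL_sequence_length_le[OF finite_hypercube_vertices _ _ assms])
    show "hypercube_adj x y \<Longrightarrow> hypercube_adj y x" for x y
      by (rule hypercube_adj_sym)
    show "v \<in> hypercube_vertices d \<Longrightarrow> d \<le> card (open_nbhd (hypercube_vertices d) hypercube_adj v)"
      for v by (simp add: card_open_nbhd_hypercube mem_hypercube_vertices)
  qed
  then show ?thesis by (simp add: card_hypercube_vertices)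
qed

definition non_preceding_flips :: "bool list set \<Rightarrow> (bool list \<Rightarrow> nat) \<Rightarrow> bool list \<Rightarrow> bool list \<Rightarrow> nat set" where
  "non_preceding_flips X f v u = {p. p < length u \<and> \<not> may_precede X f (flip p u) v}"

lemma ex_kL_sequence_hypercube:
  assumes "X \<subseteq> hypercube_vertices d"
    and "d < n + k"
    and wit: "\<And>v. v \<in> X \<Longrightarrow> \<exists>u \<in> closed_nbhd (hypercube_vertices d) hypercube_adj v.
      n \<le> card (non_preceding_flips X f v u)"
  shows "\<exists>S. is_kL_sequence (hypercube_vertices d) hypercube_adj k S \<and> length S = card X"
proof (rule ex_kL_sequence_sorted_by)
  show "finite X" using assms(1) finite_hypercube_vertices by (rule finite_subset)
  fix v assume "v \<in> X"
  then obtain u where u: "u \<in> closed_nbhd (hypercube_vertices d) hypercube_adj v"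
    and many: "n \<le> card (non_preceding_flips X f v u)"
    using wit by blast
  have "length u = d"
    using u \<open>v \<in> X\<close> assms(1) by (auto simp: closed_nbhd_def open_nbhd_def mem_hypercube_vertices)
  let ?P = "non_preceding_flips X f v u"
  have "?P \<subseteq> {..<d}" using \<open>length u = d\<close> by (auto simp: non_preceding_flips_def)
  have "{y. hypercube_adj y u \<and> may_precede X f y v} \<subseteq> (\<lambda>p. flip p u) ` ({..<d} - ?P)"
  proof clarify
    fix y assume "hypercube_adj y u" "may_precede X f y v"
    then obtain p where "p < d" "y = flip p u"
      using \<open>length u = d\<close> by (auto dest: hypercube_adj_sym simp: hypercube_adj_iff_flip)
    with \<open>may_precede X f y v\<close> show "y \<in> (\<lambda>p. flip p u) ` ({..<d} - ?P)"
      by (auto simp: non_preceding_flips_def)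
  qed
  then have "card {y. hypercube_adj y u \<and> may_precede X f y v} \<le> card ({..<d} - ?P)"
    by (meson card_image_le card_mono finite_Diff finite_imageI finite_lessThan le_trans)
  also have "\<dots> = d - card ?P"
    using \<open>?P \<subseteq> {..<d}\<close> by (simp add: card_Diff_subset finite_subset)
  also have "\<dots> < k"
    using many \<open>d < n + k\<close> card_mono[OF finite_lessThan \<open>?P \<subseteq> {..<d}\<close>] by simp
  finally show "\<exists>u \<in> closed_nbhd (hypercube_vertices d) hypercube_adj v.
      card {y. hypercube_adj y u \<and> may_precede X f y v} < k"
    using u by blast
qed (use assms(1) in auto)

definition ones :: "bool list \<Rightarrow> nat set" where
  "ones x = {i. i < length x \<and> x ! i}"

abbreviation weight :: "bool list \<Rightarrow> nat" where
  "weight x \<equiv> card (ones x)"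

lemma finite_ones [simp]: "finite (ones x)"
  by (simp add: ones_def)

lemma ones_subset: "ones x \<subseteq> {..<length x}"
  by (auto simp: ones_def)

lemma weight_le_length: "weight x \<le> length x"
  using card_mono[OF finite_lessThan ones_subset] by simp

lemma ones_inject: "length x = length y \<Longrightarrow> ones x = ones y \<Longrightarrow> x = y"
  by (rule nth_equalityI) (auto simp: ones_def set_eq_iff)

lemma ones_replicate_False [simp]: "ones (replicate d False) = {}"
  by (simp add: ones_def)

lemma ones_flip:
  "p < length x \<Longrightarrow> ones (flip p x) = (if x ! p then ones x - {p} else insert p (ones x))"
  by (auto simp: ones_def nth_flip split: if_splits)

lemma ones_flip_mem:
  assumes "p \<in> ones x"
  shows "ones (flip p x) = ones x - {p}"
proof -
  have "p < length x" "x ! p" using assms by (simp_all add: ones_def)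
  then show ?thesis by (simp add: ones_flip)
qed

lemma ones_flip_not_mem:
  assumes "p < length x" and "p \<notin> ones x"
  shows "ones (flip p x) = insert p (ones x)"
proof -
  have "\<not> x ! p" using assms by (simp add: ones_def)
  with assms(1) show ?thesis by (simp add: ones_flip)
qed

lemma even_weight_flip:
  assumes "p < length x"
  shows "even (weight (flip p x)) \<longleftrightarrow> odd (weight x)"
proof (cases "p \<in> ones x")
  case True
  then have "Suc (weight (flip p x)) = weight x"
    by (simp add: ones_flip_mem card_Suc_Diff1 del: card_Diff_insert)
  then show ?thesis by (metis even_Suc)
next
  case False
  then have "weight (flip p x) = Suc (weight x)"
    using assms by (simp add: ones_flip_not_mem)
  then show ?thesis by simp
qed

lemma weight_pos_iff: "length v = d \<Longrightarrow> 0 < weight v \<longleftrightarrow> v \<noteq> replicate d False"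
  by (metis card_gt_0_iff finite_ones length_replicate ones_inject ones_replicate_False)

definition e01 :: "nat \<Rightarrow> bool list" where
  "e01 d = map (\<lambda>i. i < 2) [0..<d]"

lemma length_e01 [simp]: "length (e01 d) = d"
  by (simp add: e01_def)

lemma ones_e01: "2 \<le> d \<Longrightarrow> ones (e01 d) = {0, 1}"
  by (auto simp: ones_def e01_def)

lemma eq_e01_iff: "2 \<le> d \<Longrightarrow> length x = d \<Longrightarrow> x = e01 d \<longleftrightarrow> ones x = {0, 1}"
  by (metis length_e01 ones_e01 ones_inject)

definition potential :: "nat \<Rightarrow> bool list \<Rightarrow> nat" where
  "potential d x =
    (if odd (weight x) then 0
     else if weight x = 2 \<and> 0 \<in> ones x then 2 * d + 1
     else 2 * d - weight x)"

lemma potential_even_ge: "even (weight x) \<Longrightarrow> 2 * d - weight x \<le> potential d x"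
  by (auto simp: potential_def)

lemma non_preceding_flips_odd_weight:
  assumes "length v = d" and "odd (weight v)"
  shows "non_preceding_flips X (potential d) v v = {..<d}"
proof -
  have "potential d v < potential d (flip p v)" if "p < d" for p
  proof -
    have "even (weight (flip p v))"
      using assms that by (simp add: even_weight_flip)
    then have "2 * d - weight (flip p v) \<le> potential d (flip p v)"
      by (rule potential_even_ge)
    moreover have "weight (flip p v) \<le> d"
      using weight_le_length[of "flip p v"] assms(1) by simp
    moreover have "potential d v = 0"
      using assms(2) by (simp add: potential_def)
    ultimately show ?thesis
      using that by linarith
  qed
  then show ?thesis
    using assms(1) by (auto simp: non_preceding_flips_def may_precede_def not_le)
qed

lemma not_may_precede_flip_flip_even_weight:
  assumes "length v = d" and "even (weight v)" and "i \<in> ones v" and "p \<in> ones v" and "p \<noteq> i"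
    and "replicate d False \<notin> X"
  shows "\<not> may_precede X (potential d) (flip p (flip i v)) v"
proof -
  let ?x = "flip p (flip i v)"
  have ones_x: "ones ?x = ones v - {i} - {p}"
    using assms(3-5) by (simp add: ones_flip_mem)
  have "{i, p} \<subseteq> ones v" using assms(3,4) by blast
  then have weight_x: "weight ?x = weight v - 2"
    using ones_x assms(5) by (simp add: card_Diff_subset Diff_insert2 [symmetric])
  have "2 \<le> weight v"
    using card_mono[OF finite_ones \<open>{i, p} \<subseteq> ones v\<close>] assms(5) by simp
  show ?thesis
  proof (cases "weight v = 2")
    case True
    then have "ones v = {i, p}"
      using \<open>{i, p} \<subseteq> ones v\<close> assms(5) by (intro card_seteq[symmetric]) auto
    then have "ones ?x = {}"
      using ones_x by auto
    then have "?x = replicate d False"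
      using assms(1) by (intro ones_inject) simp_all
    with assms(6) show ?thesis by (simp add: may_precede_def)
  next
    case False
    then have "potential d v = 2 * d - weight v"
      using assms(2) by (simp add: potential_def)
    moreover have "2 * d - weight ?x \<le> potential d ?x"
      using assms(2) \<open>2 \<le> weight v\<close> weight_x by (intro potential_even_ge) simp
    moreover have "weight v \<le> d"
      using weight_le_length[of v] assms(1) by simp
    ultimately have "potential d v < potential d ?x"
      using weight_x \<open>2 \<le> weight v\<close> by linarith
    then show ?thesis by (simp add: may_precede_def)
  qed
qed

lemma ones_subset_non_preceding_flips_even_weight:
  assumes "length v = d" and "even (weight v)" and "i \<in> ones v"
    and "replicate d False \<notin> X"
  shows "ones v \<subseteq> non_preceding_flips X (potential d) v (flip i v)"
proof
  fix p assume "p \<in> ones v"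
  then have "\<not> may_precede X (potential d) (flip p (flip i v)) v"
    using not_may_precede_flip_flip_even_weight[OF assms(1-3) _ _ assms(4)]
    by (cases "p = i") (simp_all add: may_precede_def)
  moreover have "p < length (flip i v)"
    using \<open>p \<in> ones v\<close> ones_subset by fastforce
  ultimately show "p \<in> non_preceding_flips X (potential d) v (flip i v)"
    by (simp add: non_preceding_flips_def)
qed

lemma card_2_obtain_less:
  fixes A :: "'a::linorder set"
  assumes "card A = 2"
  obtains a b where "A = {a, b}" and "a < b"
proof -
  obtain x y where "A = {x, y}" "x \<noteq> y"
    using assms by (meson card_2_iff)
  then show thesis
    using that[of "min x y" "max x y"] by (cases "x < y") (auto simp: insert_commute)
qed

lemma weight_two_third_flip:
  assumes "length v = d" and "ones v = {a, b}" and "a < b"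
    and "v \<noteq> e01 d" and "e01 d \<notin> X"
  obtains c where "c < d" and "c \<notin> ones v"
    and "\<not> may_precede X (potential d) (flip c (flip b v)) v"
proof -
  let ?u = "flip b v"
  have "b < d" using assms(1,2) ones_subset by blast
  have ones_u: "ones ?u = {a}"
    using assms(2,3) by (auto simp: ones_flip_mem)
  have "length ?u = d" using assms(1) by simp
  have "2 \<le> d" using assms(3) \<open>b < d\<close> by simp
  note e01_iff = eq_e01_iff[OF \<open>2 \<le> d\<close>]
  show thesis
  proof (cases "a = 0")
    case True
    have "b \<noteq> 1" using e01_iff[OF assms(1)] assms(2,4) True by auto
    then have "1 < d" "1 \<notin> ones v" using assms(2,3) \<open>b < d\<close> True by auto
    moreover have "ones (flip 1 ?u) = {0, 1}"
      using ones_u True \<open>1 < d\<close> \<open>length ?u = d\<close> by (simp add: ones_flip_not_mem insert_commute)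
    then have "flip 1 ?u = e01 d"
      using e01_iff \<open>length ?u = d\<close> by simp
    ultimately show thesis
      using that assms(5) by (auto simp: may_precede_def)
  next
    case False
    have "0 < d" "0 \<notin> ones v" using assms(2,3) \<open>b < d\<close> False by auto
    have ones_flip0: "ones (flip 0 ?u) = {0, a}"
      using ones_u \<open>0 < d\<close> \<open>length ?u = d\<close> False by (simp add: ones_flip_not_mem)
    have "\<not> may_precede X (potential d) (flip 0 ?u) v"
    proof (cases "a = 1")
      case True
      then show ?thesis
        using ones_flip0 e01_iff[of "flip 0 ?u"] \<open>length ?u = d\<close> assms(5)
        by (auto simp: may_precede_def)
    next
      case False
      then have "potential d (flip 0 ?u) = 2 * d + 1"
        using ones_flip0 \<open>a \<noteq> 0\<close> by (simp add: potential_def)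
      moreover have "potential d v = 2 * d - 2"
        using assms(2,3) \<open>0 \<notin> ones v\<close> by (simp add: potential_def)
      ultimately have "potential d v < potential d (flip 0 ?u)" by simp
      then show ?thesis by (simp add: may_precede_def)
    qed
    with \<open>0 < d\<close> \<open>0 \<notin> ones v\<close> show thesis by (rule that)
  qed
qed

lemma weight_two_witness:
  assumes "length v = d" and "weight v = 2" and "v \<noteq> e01 d" and "e01 d \<notin> X"
    and "replicate d False \<notin> X"
  shows "\<exists>u \<in> closed_nbhd (hypercube_vertices d) hypercube_adj v.
    3 \<le> card (non_preceding_flips X (potential d) v u)"
proof -
  obtain a b where ab: "ones v = {a, b}" "a < b"
    using assms(2) by (rule card_2_obtain_less)
  then have "b \<in> ones v" "b < d" using assms(1) ones_subset by auto
  obtain c where "c < d" "c \<notin> ones v" "\<not> may_precede X (potential d) (flip c (flip b v)) v"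
    using weight_two_third_flip[OF assms(1) ab assms(3,4)] .
  then have "insert c (ones v) \<subseteq> non_preceding_flips X (potential d) v (flip b v)"
    using ones_subset_non_preceding_flips_even_weight[OF assms(1) _ \<open>b \<in> ones v\<close> assms(5)]
      assms(1,2) by (auto simp: non_preceding_flips_def)
  then have "card (insert c (ones v)) \<le> card (non_preceding_flips X (potential d) v (flip b v))"
    by (intro card_mono) (auto simp: non_preceding_flips_def)
  moreover have "flip b v \<in> closed_nbhd (hypercube_vertices d) hypercube_adj v"
    using assms(1) \<open>b < d\<close> by (rule flip_in_closed_nbhd)
  ultimately show ?thesis
    using \<open>c \<notin> ones v\<close> assms(2) by auto
qed

lemma odd_weight_witness:
  assumes "length v = d" and "odd (weight v)" and "n \<le> d"
  shows "\<exists>u \<in> closed_nbhd (hypercube_vertices d) hypercube_adj v.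
    n \<le> card (non_preceding_flips X (potential d) v u)"
  using assms by (intro bexI[of _ v]) (simp_all add: non_preceding_flips_odd_weight closed_nbhd_def)

lemma even_weight_witness:
  assumes "length v = d" and "even (weight v)" and "n \<le> weight v" and "0 < weight v"
    and "replicate d False \<notin> X"
  shows "\<exists>u \<in> closed_nbhd (hypercube_vertices d) hypercube_adj v.
    n \<le> card (non_preceding_flips X (potential d) v u)"
proof -
  obtain i where "i \<in> ones v"
    using assms(4) by (auto simp: card_gt_0_iff)
  have "weight v \<le> card (non_preceding_flips X (potential d) v (flip i v))"
    using ones_subset_non_preceding_flips_even_weight[OF assms(1,2) \<open>i \<in> ones v\<close> assms(5)]
    by (intro card_mono) (auto simp: non_preceding_flips_def)
  moreover have "flip i v \<in> closed_nbhd (hypercube_vertices d) hypercube_adj v"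
    using \<open>i \<in> ones v\<close> assms(1) ones_subset by (intro flip_in_closed_nbhd) auto
  ultimately show ?thesis
    using assms(3) by (meson order_trans)
qed

lemma ex_kL_sequence_hypercube_d_minus_1:
  assumes "2 \<le> d"
  shows "\<exists>S. is_kL_sequence (hypercube_vertices d) hypercube_adj (d - 1) S \<and> length S = 2 ^ d - 1"
proof -
  let ?V = "hypercube_vertices d" and ?X = "hypercube_vertices d - {replicate d False}"
  have witness: "\<exists>u \<in> closed_nbhd ?V hypercube_adj v.
      2 \<le> card (non_preceding_flips ?X (potential d) v u)" if "v \<in> ?X" for v
  proof -
    have "length v = d" "0 < weight v"
      using that weight_pos_iff by (auto simp: mem_hypercube_vertices)
    show ?thesis
    proof (cases "even (weight v)")
      case True
      then have "2 \<le> weight v" using \<open>0 < weight v\<close> by presburger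
      with True show ?thesis
        by (intro even_weight_witness \<open>length v = d\<close> \<open>0 < weight v\<close>) simp_all
    qed (intro odd_weight_witness \<open>length v = d\<close> assms)
  qed
  have "replicate d False \<in> ?V" by (simp add: mem_hypercube_vertices)
  then have "card ?X = 2 ^ d - 1" by (simp add: card_hypercube_vertices)
  moreover have "\<exists>S. is_kL_sequence ?V hypercube_adj (d - 1) S \<and> length S = card ?X"
    using assms witness by (intro ex_kL_sequence_hypercube[where n = 2]) auto
  ultimately show ?thesis by simp
qed

lemma ex_kL_sequence_hypercube_d_minus_2:
  assumes "2 < d"
  shows "\<exists>S. is_kL_sequence (hypercube_vertices d) hypercube_adj (d - 2) S \<and> length S = 2 ^ d - 2"
proof -
  let ?V = "hypercube_vertices d" and ?X = "hypercube_vertices d - {replicate d False, e01 d}"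
  have witness: "\<exists>u \<in> closed_nbhd ?V hypercube_adj v.
      3 \<le> card (non_preceding_flips ?X (potential d) v u)" if "v \<in> ?X" for v
  proof -
    have "length v = d" "v \<noteq> e01 d" "0 < weight v"
      using that weight_pos_iff by (auto simp: mem_hypercube_vertices)
    consider "odd (weight v)" | "even (weight v)" "weight v \<noteq> 2" | "weight v = 2"
      by blast
    then show ?thesis
    proof cases
      case 1
      then show ?thesis using assms by (intro odd_weight_witness \<open>length v = d\<close>) simp_all
    next
      case 2
      then have "3 \<le> weight v" using \<open>0 < weight v\<close> by presburger
      with 2 show ?thesis
        by (intro even_weight_witness \<open>length v = d\<close> \<open>0 < weight v\<close>) simp_all
    next
      case 3
      then show ?thesis
        by (intro weight_two_witness \<open>length v = d\<close> \<open>v \<noteq> e01 d\<close>) simp_all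
    qed
  qed
  have "{replicate d False, e01 d} \<subseteq> ?V" by (simp add: mem_hypercube_vertices)
  then have "card ?X = card ?V - card {replicate d False, e01 d}"
    by (rule card_Diff_subset[rotated]) simp
  moreover have "replicate d False \<noteq> e01 d"
    using assms eq_e01_iff[of d "replicate d False"] by simp
  ultimately have "card ?X = 2 ^ d - 2"
    by (simp add: card_hypercube_vertices)
  moreover have "\<exists>S. is_kL_sequence ?V hypercube_adj (d - 2) S \<and> length S = card ?X"
    using assms witness by (intro ex_kL_sequence_hypercube[where n = 3]) auto
  ultimately show ?thesis by simp
qed

theorem mainTheorem11:
  fixes d :: nat
  assumes "d > 2"
  shows "grundy_L_k (hypercube_vertices d) hypercube_adj (d - 1) = 2 ^ d - 1
       \<and> grundy_L_k (hypercube_vertices d) hypercube_adj (d - 2) = 2 ^ d - 2"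
proof
  obtain S where "is_kL_sequence (hypercube_vertices d) hypercube_adj (d - 1) S" "length S = 2 ^ d - 1"
    using ex_kL_sequence_hypercube_d_minus_1[of d] assms by auto
  then show "grundy_L_k (hypercube_vertices d) hypercube_adj (d - 1) = 2 ^ d - 1"
    using hypercube_kL_sequence_length_le assms by (intro grundy_L_k_eqI) fastforce+
next
  obtain S where "is_kL_sequence (hypercube_vertices d) hypercube_adj (d - 2) S" "length S = 2 ^ d - 2"
    using ex_kL_sequence_hypercube_d_minus_2[OF assms] by blast
  then show "grundy_L_k (hypercube_vertices d) hypercube_adj (d - 2) = 2 ^ d - 2"
    using hypercube_kL_sequence_length_le assms by (intro grundy_L_k_eqI) fastforce+
qed

end
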